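(* For every integer $k>1$, the automorphism group $\mathrm{Aut}(\mathcal F_k)$ of the graph $\mathcal F_k$ is uncountable.
   Context: The vertex set $V$ consists of all reduced fractions $p/q$ with $p,q\in\mathbb Z$, $\gcd(p,q)=1$, together with $1/0$; here $p/q$ and $(-p)/(-q)$ denote the same vertex. For vertices define $d(p/q,a/b)=|pb-qa|$. The graph $\mathcal F_k$ has vertex set $V$, with an edge between $p/q$ and $a/b$ exactly when $d(p/q,a/b)=k$. $\mathrm{Aut}$ denotes the group of graph automorphisms. *)

theory Defs
  imports Main "HOL-Library.FuncSet" "HOL-Library.Countable_Set"
begin

text \<open>Vertices: reduced fractions p/q with gcd(p,q)=1, identified up to sign (p,q) ~ (-p,-q).
  We use the canonical representative with q > 0, or (p,q) = (1,0) for 1/0.\<close>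
definition farey_vertices :: "(int \<times> int) set" where
  "farey_vertices = {(p, q). coprime p q \<and> (q > 0 \<or> (q = 0 \<and> p = 1))}"

definition farey_dist :: "int \<times> int \<Rightarrow> int \<times> int \<Rightarrow> int" where
  "farey_dist v w = \<bar>fst v * snd w - snd v * fst w\<bar>"

definition farey_adj :: "int \<Rightarrow> int \<times> int \<Rightarrow> int \<times> int \<Rightarrow> bool" where
  "farey_adj k v w \<longleftrightarrow> v \<in> farey_vertices \<and> w \<in> farey_vertices \<and> farey_dist v w = k"

text \<open>Graph automorphisms of F_k: bijections of the vertex set preserving and reflecting
  adjacency; represented as extensional functions so that distinct automorphisms are
  distinct maps on vertices.\<close>
definition farey_aut :: "int \<Rightarrow> (int \<times> int \<Rightarrow> int \<times> int) set" where
  "farey_aut k = {f. f \<in> extensional farey_vertices \<and> bij_betw f farey_vertices farey_vertices \<and>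
     (\<forall>v\<in>farey_vertices. \<forall>w\<in>farey_vertices. farey_adj k v w \<longleftrightarrow> farey_adj k (f v) (f w))}"

end

theory Submission
  imports Defs
begin

text \<open>Call the vertices p/q with q > 0 and k dvd q the k-denominator vertices, and sort them into
  the strips n \<le> p/q < n + 1. An edge of F_k never joins a k-denominator vertex to a vertex with
  nonzero denominator not divisible by k, nor two k-denominator vertices in different strips
  (their determinant is at least q + b \<ge> 2k). Hence every permutation of the strips, realised by
  integer translations p/q \<mapsto> p/q + t that keep all other vertices (in particular 1/0) fixed,
  is an automorphism of F_k. Distinct permutations of \<int> give distinct automorphisms, and there
  are uncountably many permutations of \<int>.\<close>

definition k_denominator :: "int \<Rightarrow> int \<times> int \<Rightarrow> bool" where
  "k_denominator k v \<longleftrightarrow> 0 < snd v \<and> k dvd snd v"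

definition strip :: "int \<times> int \<Rightarrow> int" where
  "strip v = fst v div snd v"

definition strip_perm :: "int \<Rightarrow> (int \<Rightarrow> int) \<Rightarrow> int \<times> int \<Rightarrow> int \<times> int" where
  "strip_perm k \<sigma> v =
     (if k_denominator k v then (fst v + (\<sigma> (strip v) - strip v) * snd v, snd v) else v)"

definition same_block :: "int \<Rightarrow> int \<times> int \<Rightarrow> int \<times> int \<Rightarrow> bool" where
  "same_block k v w \<longleftrightarrow>
     (k_denominator k v \<longleftrightarrow> k_denominator k w) \<and> (k_denominator k v \<longrightarrow> strip v = strip w)"

lemma snd_strip_perm [simp]: "snd (strip_perm k \<sigma> v) = snd v"
  by (simp add: strip_perm_def)

lemma k_denominator_strip_perm [simp]:
  "k_denominator k (strip_perm k \<sigma> v) \<longleftrightarrow> k_denominator k v"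
  by (simp add: strip_perm_def k_denominator_def)

lemma strip_strip_perm:
  "k_denominator k v \<Longrightarrow> strip (strip_perm k \<sigma> v) = \<sigma> (strip v)"
  by (simp add: strip_perm_def k_denominator_def strip_def)

lemma strip_perm_comp: "strip_perm k \<sigma> (strip_perm k \<tau> v) = strip_perm k (\<sigma> \<circ> \<tau>) v"
proof (cases "k_denominator k v")
  case True
  then have "strip_perm k \<sigma> (strip_perm k \<tau> v) =
      (fst (strip_perm k \<tau> v) + (\<sigma> (\<tau> (strip v)) - \<tau> (strip v)) * snd v, snd v)"
    by (simp add: strip_perm_def[of k \<sigma>] strip_strip_perm)
  with True show ?thesis
    by (simp add: strip_perm_def algebra_simps)
qed (simp add: strip_perm_def)

lemma strip_perm_id [simp]: "strip_perm k id v = v"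
  by (simp add: strip_perm_def)

lemma coprime_add_mult_left_iff:
  fixes p q t :: int
  shows "coprime (p + t * q) q \<longleftrightarrow> coprime p q"
proof -
  have "gcd (p + t * q) q = gcd p q"
    by (metis gcd.commute gcd_add_mult add.commute)
  then show ?thesis
    by (simp add: coprime_iff_gcd_eq_1)
qed

lemma strip_perm_in_farey_vertices:
  "v \<in> farey_vertices \<Longrightarrow> strip_perm k \<sigma> v \<in> farey_vertices"
  by (auto simp: strip_perm_def farey_vertices_def k_denominator_def coprime_add_mult_left_iff)

lemma same_block_strip_perm:
  assumes "inj \<sigma>"
  shows "same_block k (strip_perm k \<sigma> v) (strip_perm k \<sigma> w) \<longleftrightarrow> same_block k v w"
proof -
  have "strip (strip_perm k \<sigma> v) = strip (strip_perm k \<sigma> w) \<longleftrightarrow> strip v = strip w"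
    if "k_denominator k v" "k_denominator k w"
    using that assms by (simp add: strip_strip_perm inj_eq)
  then show ?thesis
    unfolding same_block_def by auto
qed

lemma farey_dist_strip_perm:
  assumes "same_block k v w \<or> snd v = 0 \<or> snd w = 0"
  shows "farey_dist (strip_perm k \<sigma> v) (strip_perm k \<sigma> w) = farey_dist v w"
  using assms
  by (auto simp: same_block_def strip_perm_def farey_dist_def k_denominator_def algebra_simps)

lemma dvd_denominator_if_dvd_cross:
  fixes p q a b k :: int
  assumes "coprime p q" "k dvd q" "k dvd p * b - q * a"
  shows "k dvd b"
proof -
  obtain r where "q = k * r"
    using assms(2) by blast
  then have "coprime k p"
    using assms(1) by (simp add: coprime_commute)
  moreover have "k dvd (p * b - q * a) + q * a"
    using assms(2,3) by (intro dvd_add) simp_all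
  ultimately show ?thesis
    by (simp add: coprime_dvd_mult_right_iff)
qed

lemma cross_ge_if_floor_less:
  fixes p q a b :: int
  assumes "0 < q" "0 < b" "\<not> b dvd a" "p div q < a div b"
  shows "q + b \<le> q * a - p * b"
proof -
  define m where "m = a div b"
  have "p + 1 \<le> q * (p div q) + q"
    using mult_div_mod_eq[of q p] pos_mod_bound[OF assms(1), of p] by linarith
  also have "\<dots> = (p div q + 1) * q"
    by (simp add: algebra_simps)
  also have "\<dots> \<le> m * q"
    using assms(1,4) by (simp add: m_def mult_right_mono)
  finally have "(p + 1) * b \<le> m * q * b"
    using assms(2) by (simp add: mult_right_mono)
  moreover have "0 < a mod b"
    using assms(2,3) pos_mod_sign[OF assms(2), of a] by (auto simp: dvd_eq_mod_eq_0 order_le_less)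
  then have "b * m + 1 \<le> a"
    using mult_div_mod_eq[of b a] unfolding m_def by linarith
  then have "q * (b * m + 1) \<le> q * a"
    using assms(1) by (simp add: mult_left_mono)
  ultimately show ?thesis
    by (simp add: algebra_simps)
qed

lemma farey_dist_ne_across_blocks:
  assumes "1 < k" "v \<in> farey_vertices" "w \<in> farey_vertices"
    and "snd v \<noteq> 0" "snd w \<noteq> 0" "\<not> same_block k v w"
  shows "farey_dist v w \<noteq> k"
proof
  assume dist: "farey_dist v w = k"
  obtain p q a b where v: "v = (p, q)" and w: "w = (a, b)"
    by (cases v, cases w)
  have q: "0 < q" "coprime p q" and b: "0 < b" "coprime a b"
    using assms(2-5) v w by (auto simp: farey_vertices_def)
  have cross: "\<bar>p * b - q * a\<bar> = k"
    using dist v w by (simp add: farey_dist_def)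
  then have "k dvd p * b - q * a" "k dvd a * q - b * p"
    by (metis dvd_abs_iff dvd_refl, metis abs_minus_commute dvd_abs_iff dvd_refl mult.commute)
  then have "k dvd q \<longleftrightarrow> k dvd b"
    using q b dvd_denominator_if_dvd_cross by blast
  then have "k dvd q" "k dvd b" "p div q \<noteq> a div b"
    using assms(6) q(1) b(1) v w by (auto simp: same_block_def k_denominator_def strip_def)
  then have kq: "k \<le> q" and kb: "k \<le> b"
    using q(1) b(1) by (auto intro: zdvd_imp_le)
  have not_dvd: "\<not> q dvd p" "\<not> b dvd a"
    using q b kq kb assms(1) by (auto simp: coprime_absorb_right coprime_commute)
  show False
  proof (cases "p div q < a div b")
    case True
    from cross_ge_if_floor_less[OF q(1) b(1) not_dvd(2) True] cross kq kb assms(1)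
    show False by linarith
  next
    case False
    with \<open>p div q \<noteq> a div b\<close> have "a div b < p div q" by simp
    from cross_ge_if_floor_less[OF b(1) q(1) not_dvd(1) this] cross kq kb assms(1)
    show False by (simp add: algebra_simps)
  qed
qed

lemma farey_adj_strip_perm:
  assumes "1 < k" "inj \<sigma>" "v \<in> farey_vertices" "w \<in> farey_vertices"
  shows "farey_adj k (strip_perm k \<sigma> v) (strip_perm k \<sigma> w) \<longleftrightarrow> farey_adj k v w"
proof (cases "same_block k v w \<or> snd v = 0 \<or> snd w = 0")
  case True
  then show ?thesis
    using assms(3,4) by (simp add: farey_adj_def farey_dist_strip_perm strip_perm_in_farey_vertices)
next
  case False
  then have "\<not> same_block k (strip_perm k \<sigma> v) (strip_perm k \<sigma> w)"
    "snd (strip_perm k \<sigma> v) \<noteq> 0" "snd (strip_perm k \<sigma> w) \<noteq> 0"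
    using same_block_strip_perm[OF assms(2)] by (auto simp: strip_perm_def)
  then show ?thesis
    using False assms farey_dist_ne_across_blocks strip_perm_in_farey_vertices
    by (simp add: farey_adj_def)
qed

lemma restrict_strip_perm_in_farey_aut:
  assumes "1 < k" "bij \<sigma>"
  shows "restrict (strip_perm k \<sigma>) farey_vertices \<in> farey_aut k"
proof -
  have "inv \<sigma> \<circ> \<sigma> = id" "\<sigma> \<circ> inv \<sigma> = id"
    using inv_o_cancel[OF bij_is_inj] surj_iff[THEN iffD1, OF bij_is_surj] assms(2) by blast+
  then have "bij_betw (strip_perm k \<sigma>) farey_vertices farey_vertices"
    by (intro bij_betw_byWitness[where f' = "strip_perm k (inv \<sigma>)"])
      (auto simp: strip_perm_comp strip_perm_in_farey_vertices)
  then show ?thesis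
    using farey_adj_strip_perm[OF assms(1) bij_is_inj[OF assms(2)]]
    unfolding farey_aut_def by simp
qed

lemma inj_restrict_strip_perm:
  assumes "1 < k"
  shows "inj (\<lambda>\<sigma>. restrict (strip_perm k \<sigma>) farey_vertices)"
proof (rule injI)
  fix \<sigma> \<tau> :: "int \<Rightarrow> int"
  assume eq: "restrict (strip_perm k \<sigma>) farey_vertices = restrict (strip_perm k \<tau>) farey_vertices"
  show "\<sigma> = \<tau>"
  proof
    fix n
    define v where "v = (1 + n * k, k)"
    have "v \<in> farey_vertices"
      using assms coprime_add_mult_left_iff[of 1 n k] by (simp add: v_def farey_vertices_def)
    moreover have "k_denominator k v" "strip v = n"
      using assms by (simp_all add: v_def k_denominator_def strip_def)
    moreover have "strip_perm k \<sigma> v = strip_perm k \<tau> v"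
      using fun_cong[OF eq, of v] \<open>v \<in> farey_vertices\<close> by simp
    ultimately show "\<sigma> n = \<tau> n"
      by (metis strip_strip_perm)
  qed
qed

definition pair_swap :: "nat set \<Rightarrow> int \<Rightarrow> int" where
  "pair_swap X n = (if n div 2 \<in> int ` X then (if even n then n + 1 else n - 1) else n)"

lemma pair_swap_pair_swap [simp]: "pair_swap X (pair_swap X n) = n"
  by (auto simp: pair_swap_def elim!: oddE)

lemma bij_pair_swap: "bij (pair_swap X)"
  by (rule involuntory_imp_bij) simp

lemma inj_pair_swap: "inj pair_swap"
proof (rule injI)
  fix X Y
  assume eq: "pair_swap X = pair_swap Y"
  have swap_even: "pair_swap Z (2 * int j) = (if j \<in> Z then 2 * int j + 1 else 2 * int j)" for Z j
    by (simp add: pair_swap_def inj_image_mem_iff)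
  have "j \<in> X \<longleftrightarrow> j \<in> Y" for j
    using fun_cong[OF eq, of "2 * int j"] by (simp add: swap_even split: if_splits)
  then show "X = Y"
    by blast
qed

lemma uncountable_bij_int: "uncountable {\<sigma> :: int \<Rightarrow> int. bij \<sigma>}"
proof
  assume "countable {\<sigma> :: int \<Rightarrow> int. bij \<sigma>}"
  moreover have "range pair_swap \<subseteq> {\<sigma>. bij \<sigma>}"
    using bij_pair_swap by blast
  ultimately have "countable (UNIV :: nat set set)"
    using countable_subset countable_image_inj_on inj_pair_swap by blast
  then obtain f :: "nat \<Rightarrow> nat set" where "range f = UNIV"
    by (metis UNIV_not_empty uncountable_def)
  then show False
    using Cantors_theorem[of "UNIV :: nat set"] by simp
qed

theorem corollary1p2:
  fixes k :: int
  assumes "k > 1"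
  shows "uncountable (farey_aut k)"
proof
  let ?aut = "\<lambda>\<sigma>. restrict (strip_perm k \<sigma>) farey_vertices"
  assume countable_aut: "countable (farey_aut k)"
  have "?aut ` {\<sigma>. bij \<sigma>} \<subseteq> farey_aut k"
    using restrict_strip_perm_in_farey_aut[OF assms] by blast
  then have "countable (?aut ` {\<sigma>. bij \<sigma>})"
    using countable_aut by (rule countable_subset)
  then have "countable {\<sigma> :: int \<Rightarrow> int. bij \<sigma>}"
    by (rule countable_image_inj_on)
      (rule inj_on_subset[OF inj_restrict_strip_perm[OF assms] subset_UNIV])
  with uncountable_bij_int show False
    by blast
qed

end
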